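(* For the system $\dot x=f_\sigma(x)$ described in the context, for every $\sigma\in\{0,1\}^{|\tilde{\mathcal L}|}$ there exists $x^*$ with $f_\sigma(x^* )=0$. Moreover, every equilibrium $z^*=(x^*,\sigma)$ (i.e. $f_\sigma(x^* )=0$), with $x^*=(\eta^*,\omega^*,p^{M,*},p^{c,*},\psi^* )$, satisfies $\omega^*=\mathbf 0_{|\mathcal N|}$ and $p^{c,*}\in\operatorname{Im}(\mathbf 1_{|\mathcal N|})$.
   Context: Power network $(\mathcal N,\mathcal E)$: connected directed graph, $\mathcal N=\{1,\dots,|\mathcal N|\}$, arbitrarily oriented ($(i,j)\in\mathcal E\Rightarrow(j,i)\notin\mathcal E$), $\mathcal N^p_j=\{k:(k,j)\in\mathcal E\}$, $\mathcal N^s_j=\{k:(j,k)\in\mathcal E\}$; communication network $(\mathcal N,\tilde{\mathcal E})$ connected directed. For $j\in\mathcal N$, $\mathcal L_j$ is a finite set of on-off loads, $\tilde{\mathcal L}=\{(l,j):l\in\mathcal L_j,j\in\mathcal N\}$, load magnitudes $\overline d_{l,j}>0$. Constants $M_j,\gamma_j,\kappa_j,A_j,\tau_j>0$, $p^L_j\in\mathbb R$, $B_{ij}>0$ ($(i,j)\in\mathcal E$), $\tau_{ij}>0$ ($(i,j)\in\tilde{\mathcal E}$). For $x=(\eta,\omega,p^M,p^c,\psi)\in\mathbb R^n$, $n=3|\mathcal N|+|\mathcal E|+|\tilde{\mathcal E}|$, and $\sigma\in\{0,1\}^{|\tilde{\mathcal L}|}$, $f_\sigma(x)$ is the vector field given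 by $\dot\eta_{ij}=\omega_i-\omega_j$ ($(i,j)\in\mathcal E$); $M_j\dot\omega_j=p^M_j-p^L_j-A_j\omega_j-\sum_{l\in\mathcal L_j}\overline d_{l,j}\sigma_{l,j}-\sum_{k\in\mathcal N^s_j}B_{jk}\eta_{jk}+\sum_{i\in\mathcal N^p_j}B_{ij}\eta_{ij}$; $\gamma_j\dot p^M_j=-(p^M_j+\kappa_j\omega_j-\kappa_jp^c_j)$; $\tau_{ij}\dot\psi_{ij}=p^c_i-p^c_j$ ($(i,j)\in\tilde{\mathcal E}$); $\tau_j\dot p^c_j=-p^M_j+p^L_j+\sum_{l\in\mathcal L_j}\overline d_{l,j}\sigma_{l,j}-\sum_{k:(j,k)\in\tilde{\mathcal E}}\psi_{jk}+\sum_{i:(i,j)\in\tilde{\mathcal E}}\psi_{ij}$. *)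

theory Defs
  imports Complex_Main
begin

text \<open>Nodes are 1..nn (nn = |N|). A state x = (eta, omega, pM, pc, psi) is represented by
functions: eta indexed by power lines (edges in E), omega, pM, pc indexed by nodes,
psi indexed by communication edges (edges in Et). Loads: L j is the set of on-off loads
at bus j, dbar l j their magnitudes, sigma (l,j) the switching state in {0,1}.\<close>

definition weakly_connected :: "nat set \<Rightarrow> (nat \<times> nat) set \<Rightarrow> bool" where
  "weakly_connected V R \<longleftrightarrow> R \<subseteq> V \<times> V \<and>
     (\<forall>i\<in>V. \<forall>j\<in>V. (i, j) \<in> (R \<union> R\<inverse>)\<^sup>*)"

definition load_sum :: "(nat \<Rightarrow> 'l set) \<Rightarrow> ('l \<Rightarrow> nat \<Rightarrow> real) \<Rightarrow> ('l \<times> nat \<Rightarrow> real) \<Rightarrow> nat \<Rightarrow> real" where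
  "load_sum L dbar \<sigma> j = (\<Sum>l\<in>L j. dbar l j * \<sigma> (l, j))"

definition fsys ::
  "nat \<Rightarrow> (nat \<times> nat) set \<Rightarrow> (nat \<times> nat) set \<Rightarrow> (nat \<Rightarrow> 'l set) \<Rightarrow> ('l \<Rightarrow> nat \<Rightarrow> real)
   \<Rightarrow> (nat \<Rightarrow> real) \<Rightarrow> (nat \<Rightarrow> real) \<Rightarrow> (nat \<Rightarrow> real) \<Rightarrow> (nat \<Rightarrow> real) \<Rightarrow> (nat \<Rightarrow> real) \<Rightarrow> (nat \<Rightarrow> real)
   \<Rightarrow> (nat \<times> nat \<Rightarrow> real) \<Rightarrow> (nat \<times> nat \<Rightarrow> real)
   \<Rightarrow> ('l \<times> nat \<Rightarrow> real)
   \<Rightarrow> (nat \<times> nat \<Rightarrow> real) \<times> (nat \<Rightarrow> real) \<times> (nat \<Rightarrow> real) \<times> (nat \<Rightarrow> real) \<times> (nat \<times> nat \<Rightarrow> real)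
   \<Rightarrow> (nat \<times> nat \<Rightarrow> real) \<times> (nat \<Rightarrow> real) \<times> (nat \<Rightarrow> real) \<times> (nat \<Rightarrow> real) \<times> (nat \<times> nat \<Rightarrow> real)"
  where
  "fsys nn E Et L dbar M \<gamma> \<kappa> A \<tau> pL B \<tau>c \<sigma> x =
     (case x of (\<eta>, \<omega>, pM, pc, \<psi>) \<Rightarrow>
       ((\<lambda>(i, j). \<omega> i - \<omega> j),
        (\<lambda>j. (pM j - pL j - A j * \<omega> j - load_sum L dbar \<sigma> j
               - (\<Sum>k\<in>{k\<in>{1..nn}. (j, k) \<in> E}. B (j, k) * \<eta> (j, k))
               + (\<Sum>i\<in>{i\<in>{1..nn}. (i, j) \<in> E}. B (i, j) * \<eta> (i, j))) / M j),
        (\<lambda>j. - (pM j + \<kappa> j * \<omega> j - \<kappa> j * pc j) / \<gamma> j),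
        (\<lambda>j. (- pM j + pL j + load_sum L dbar \<sigma> j
               - (\<Sum>k\<in>{k\<in>{1..nn}. (j, k) \<in> Et}. \<psi> (j, k))
               + (\<Sum>i\<in>{i\<in>{1..nn}. (i, j) \<in> Et}. \<psi> (i, j))) / \<tau> j),
        (\<lambda>(i, j). (pc i - pc j) / \<tau>c (i, j))))"

definition is_equilibrium where
  "is_equilibrium nn E Et L dbar M \<gamma> \<kappa> A \<tau> pL B \<tau>c \<sigma> x \<longleftrightarrow>
     (case fsys nn E Et L dbar M \<gamma> \<kappa> A \<tau> pL B \<tau>c \<sigma> x of (d\<eta>, d\<omega>, dpM, dpc, d\<psi>) \<Rightarrow>
        (\<forall>e\<in>E. d\<eta> e = 0) \<and> (\<forall>j\<in>{1..nn}. d\<omega> j = 0) \<and> (\<forall>j\<in>{1..nn}. dpM j = 0)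
        \<and> (\<forall>j\<in>{1..nn}. dpc j = 0) \<and> (\<forall>e\<in>Et. d\<psi> e = 0))"

end

theory Submission
  imports Defs
begin

text \<open>At an equilibrium, \<open>\<omega>\<close> is constant along power lines and \<open>p\<^sup>c\<close> along communication
links, so both are constant by connectivity. Adding the frequency equation and the \<open>p\<^sup>c\<close>
equation at a bus cancels \<open>p\<^sup>M\<close>, \<open>p\<^sup>L\<close> and the loads and leaves \<open>A\<^sub>j \<omega> = -\<close> (net line
outflow) \<open>-\<close> (net \<open>\<psi>\<close> outflow); summing over all buses kills both outflows, so
\<open>\<omega> \<Sum> A\<^sub>j = 0\<close>. Conversely, with \<open>\<omega> = 0\<close> and \<open>p\<^sup>c = c\<close>, \<open>p\<^sup>M = \<kappa> c\<close> for the \<open>c\<close> balancing the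
total load, the remaining bus imbalances sum to zero, and on a connected graph every
zero-sum vector is the net outflow of some edge flow (send unit flows along paths
from a root); the line flow then determines \<open>\<eta> = flow / B\<close>. Neither argument uses that
\<open>\<sigma>\<close> is 0/1-valued, the orientation of \<open>E\<close>, or the load data.\<close>

definition net_outflow :: "nat set \<Rightarrow> (nat \<times> nat) set \<Rightarrow> (nat \<times> nat \<Rightarrow> real) \<Rightarrow> nat \<Rightarrow> real" where
  "net_outflow V R \<phi> j = (\<Sum>k\<in>{k\<in>V. (j, k) \<in> R}. \<phi> (j, k)) - (\<Sum>i\<in>{i\<in>V. (i, j) \<in> R}. \<phi> (i, j))"

lemma net_outflow_add_edge:
  assumes "finite V" "R \<subseteq> V \<times> V" "(a, b) \<in> R"
  shows "net_outflow V R (\<lambda>e. \<phi> e + (if e = (a, b) then c else 0)) i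
         = net_outflow V R \<phi> i + (if i = a then c else 0) - (if i = b then c else 0)"
proof -
  have out: "(\<Sum>k\<in>{k\<in>V. (i, k) \<in> R}. if (i, k) = (a, b) then c else 0) = (if i = a then c else 0)"
    using assms by (cases "i = a") (auto simp: sum.delta')
  have inc: "(\<Sum>k\<in>{k\<in>V. (k, i) \<in> R}. if (k, i) = (a, b) then c else 0) = (if i = b then c else 0)"
    using assms by (cases "i = b") (auto simp: sum.delta')
  show ?thesis
    unfolding net_outflow_def using out inc by (simp add: sum.distrib)
qed

lemma net_outflow_sum_scaled:
  assumes "finite V"
  shows "net_outflow V R (\<lambda>e. \<Sum>j\<in>J. c j * F j e) i = (\<Sum>j\<in>J. c j * net_outflow V R (F j) i)"
  unfolding net_outflow_def using assms
  by (simp add: sum_subtractf right_diff_distrib sum_distrib_left sum.swap[of _ J])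

lemma sum_net_outflow_eq_0:
  assumes "finite V" "R \<subseteq> V \<times> V"
  shows "(\<Sum>i\<in>V. net_outflow V R \<phi> i) = 0"
  unfolding net_outflow_def using assms
  by (simp add: sum_subtractf sum.swap_restrict[of V V "\<lambda>i k. \<phi> (i, k)"])

lemma unit_flow_exists:
  assumes "finite V" "R \<subseteq> V \<times> V" "(u, v) \<in> (R \<union> R\<inverse>)\<^sup>*"
  shows "\<exists>\<phi>. \<forall>i. net_outflow V R \<phi> i = (if i = u then 1 else 0) - (if i = v then 1 else 0)"
  using assms(3)
proof (induction rule: rtrancl_induct)
  case base
  show ?case by (rule exI[of _ "\<lambda>_. 0"]) (simp add: net_outflow_def)
next
  case (step m v)
  then obtain \<phi> where \<phi>: "\<And>i. net_outflow V R \<phi> i = (if i = u then 1 else 0) - (if i = m then 1 else 0)"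
    by blast
  from step.hyps(2) consider "(m, v) \<in> R" | "(v, m) \<in> R" by blast
  then show ?case
  proof cases
    case 1
    have "\<forall>i. net_outflow V R (\<lambda>e. \<phi> e + (if e = (m, v) then 1 else 0)) i
              = (if i = u then 1 else 0) - (if i = v then 1 else 0)"
      using net_outflow_add_edge[OF assms(1,2) 1] \<phi> by simp
    then show ?thesis by blast
  next
    case 2
    have "\<forall>i. net_outflow V R (\<lambda>e. \<phi> e + (if e = (v, m) then -1 else 0)) i
              = (if i = u then 1 else 0) - (if i = v then 1 else 0)"
      using net_outflow_add_edge[OF assms(1,2) 2] \<phi> by simp
    then show ?thesis by blast
  qed
qed

lemma flow_with_net_outflow_exists:
  assumes "finite V" "weakly_connected V R" "r \<in> V" "(\<Sum>i\<in>V. b i) = 0"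
  shows "\<exists>\<phi>. \<forall>i\<in>V. net_outflow V R \<phi> i = b i"
proof -
  have R: "R \<subseteq> V \<times> V" and paths: "\<And>j. j \<in> V \<Longrightarrow> (j, r) \<in> (R \<union> R\<inverse>)\<^sup>*"
    using assms(2,3) unfolding weakly_connected_def by auto
  obtain F where F: "\<And>j i. j \<in> V \<Longrightarrow>
      net_outflow V R (F j) i = (if i = j then 1 else 0) - (if i = r then 1 else 0)"
    using unit_flow_exists[OF assms(1) R paths] by metis
  have "net_outflow V R (\<lambda>e. \<Sum>j\<in>V. b j * F j e) i = b i" if "i \<in> V" for i
  proof -
    have "net_outflow V R (\<lambda>e. \<Sum>j\<in>V. b j * F j e) i
        = (\<Sum>j\<in>V. b j * ((if i = j then 1 else 0) - (if i = r then 1 else 0)))"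
      using F by (simp add: net_outflow_sum_scaled[OF assms(1)])
    also have "\<dots> = (\<Sum>j\<in>V. if i = j then b j else 0) - (\<Sum>j\<in>V. b j) * (if i = r then 1 else 0)"
      by (simp add: right_diff_distrib sum_subtractf sum_distrib_right) (rule sum.cong, auto)
    also have "\<dots> = b i" using that assms(1,4) by simp
    finally show ?thesis .
  qed
  then show ?thesis by blast
qed

lemma weakly_connected_const:
  assumes "weakly_connected V R" "\<forall>(i, j)\<in>R. f i = f j" "r \<in> V" "j \<in> V"
  shows "f j = f r"
proof -
  have "(r, j) \<in> (R \<union> R\<inverse>)\<^sup>*" using assms(1,3,4) unfolding weakly_connected_def by auto
  then show ?thesis by (induction rule: rtrancl_induct) (use assms(2) in auto)
qed

lemma is_equilibrium_iff:
  assumes "\<forall>j\<in>{1..nn}. M j \<noteq> 0 \<and> \<gamma> j \<noteq> 0 \<and> \<tau> j \<noteq> 0" "\<forall>e\<in>Et. \<tau>c e \<noteq> 0"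
  shows "is_equilibrium nn E Et L dbar M \<gamma> \<kappa> A \<tau> pL B \<tau>c \<sigma> (\<eta>, \<omega>, pM, pc, \<psi>) \<longleftrightarrow>
     (\<forall>(i, j)\<in>E. \<omega> i = \<omega> j) \<and>
     (\<forall>j\<in>{1..nn}. pM j - pL j - A j * \<omega> j - load_sum L dbar \<sigma> j
                    = net_outflow {1..nn} E (\<lambda>e. B e * \<eta> e) j) \<and>
     (\<forall>j\<in>{1..nn}. pM j = \<kappa> j * (pc j - \<omega> j)) \<and>
     (\<forall>j\<in>{1..nn}. pL j + load_sum L dbar \<sigma> j - pM j = net_outflow {1..nn} Et \<psi> j) \<and>
     (\<forall>(i, j)\<in>Et. pc i = pc j)"
  using assms unfolding is_equilibrium_def fsys_def net_outflow_def
  by (auto simp: algebra_simps)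

lemma equilibrium_frequency_zero_and_pc_consensus:
  assumes "nn \<ge> 1" "weakly_connected {1..nn} E" "weakly_connected {1..nn} Et"
    and "\<forall>j\<in>{1..nn}. A j > 0"
    and nonzero: "\<forall>j\<in>{1..nn}. M j \<noteq> 0 \<and> \<gamma> j \<noteq> 0 \<and> \<tau> j \<noteq> 0" "\<forall>e\<in>Et. \<tau>c e \<noteq> 0"
    and equilibrium: "is_equilibrium nn E Et L dbar M \<gamma> \<kappa> A \<tau> pL B \<tau>c \<sigma> (\<eta>, \<omega>, pM, pc, \<psi>)"
  shows "(\<forall>j\<in>{1..nn}. \<omega> j = 0) \<and> (\<exists>c. \<forall>j\<in>{1..nn}. pc j = c)"
proof -
  let ?V = "{1..nn}"
  let ?line = "net_outflow ?V E (\<lambda>e. B e * \<eta> e)" and ?comm = "net_outflow ?V Et \<psi>"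
  have root: "1 \<in> ?V" using assms(1) by simp
  note eq = equilibrium[unfolded is_equilibrium_iff[OF nonzero]]
  have \<omega>_const: "\<omega> j = \<omega> 1" if "j \<in> ?V" for j
    using weakly_connected_const[OF assms(2) _ root that] eq by blast
  have pc_const: "pc j = pc 1" if "j \<in> ?V" for j
    using weakly_connected_const[OF assms(3) _ root that] eq by blast
  have balance: "A j * \<omega> 1 = - ?line j - ?comm j" if "j \<in> ?V" for j
  proof -
    have "pM j - pL j - A j * \<omega> j - load_sum L dbar \<sigma> j = ?line j"
      and "pL j + load_sum L dbar \<sigma> j - pM j = ?comm j"
      using eq that by blast+
    then show ?thesis unfolding \<omega>_const[OF that] by linarith
  qed
  have "sum A ?V * \<omega> 1 = (\<Sum>j\<in>?V. - ?line j - ?comm j)"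
    using balance by (simp add: sum_distrib_right)
  also have "\<dots> = 0"
    using sum_net_outflow_eq_0[of ?V E] sum_net_outflow_eq_0[of ?V Et] assms(2,3)
    by (simp add: sum_subtractf sum_negf weakly_connected_def)
  finally have "sum A ?V * \<omega> 1 = 0" .
  moreover have "sum A ?V > 0" using assms(1,4) by (intro sum_pos) auto
  ultimately have "\<omega> 1 = 0" by simp
  then show ?thesis using \<omega>_const pc_const by metis
qed

lemma equilibrium_exists:
  assumes "nn \<ge> 1" "weakly_connected {1..nn} E" "weakly_connected {1..nn} Et"
    and "\<forall>j\<in>{1..nn}. \<kappa> j > 0" "\<forall>e\<in>E. B e \<noteq> 0"
    and nonzero: "\<forall>j\<in>{1..nn}. M j \<noteq> 0 \<and> \<gamma> j \<noteq> 0 \<and> \<tau> j \<noteq> 0" "\<forall>e\<in>Et. \<tau>c e \<noteq> 0"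
  shows "\<exists>x. is_equilibrium nn E Et L dbar M \<gamma> \<kappa> A \<tau> pL B \<tau>c \<sigma> x"
proof -
  let ?V = "{1..nn}"
  let ?D = "load_sum L dbar \<sigma>"
  have root: "1 \<in> ?V" using assms(1) by simp
  have "sum \<kappa> ?V > 0" using assms(1,4) by (intro sum_pos) auto
  define c where "c = (\<Sum>j\<in>?V. pL j + ?D j) / sum \<kappa> ?V"
  define pM where "pM j = \<kappa> j * c" for j
  define b where "b j = pM j - pL j - ?D j" for j
  have "(\<Sum>j\<in>?V. b j) = sum \<kappa> ?V * c - (\<Sum>j\<in>?V. pL j + ?D j)"
    unfolding b_def pM_def by (simp add: sum_subtractf sum.distrib sum_distrib_right)
  then have b_sum: "(\<Sum>j\<in>?V. b j) = 0" "(\<Sum>j\<in>?V. - b j) = 0"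
    unfolding c_def using \<open>sum \<kappa> ?V > 0\<close> by (simp_all add: sum_negf)
  obtain \<phi> where \<phi>: "\<forall>i\<in>?V. net_outflow ?V E \<phi> i = b i"
    using flow_with_net_outflow_exists[OF _ assms(2) root b_sum(1)] by auto
  obtain \<psi> where \<psi>: "\<forall>i\<in>?V. net_outflow ?V Et \<psi> i = - b i"
    using flow_with_net_outflow_exists[OF _ assms(3) root b_sum(2)] by auto
  define \<eta> where "\<eta> e = \<phi> e / B e" for e
  have "net_outflow ?V E (\<lambda>e. B e * \<eta> e) = net_outflow ?V E \<phi>"
    unfolding net_outflow_def \<eta>_def using assms(5)
    by (intro ext arg_cong2[where f = "(-)"] sum.cong) auto
  then have "is_equilibrium nn E Et L dbar M \<gamma> \<kappa> A \<tau> pL B \<tau>c \<sigma> (\<eta>, \<lambda>_. 0, pM, \<lambda>_. c, \<psi>)"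
    unfolding is_equilibrium_iff[OF nonzero] using \<phi> \<psi> by (simp add: b_def pM_def)
  then show ?thesis by blast
qed

theorem lemma3:
  fixes nn :: nat
    and E Et :: "(nat \<times> nat) set"
    and L :: "nat \<Rightarrow> 'l set"
    and dbar :: "'l \<Rightarrow> nat \<Rightarrow> real"
    and M \<gamma> \<kappa> A \<tau> pL :: "nat \<Rightarrow> real"
    and B \<tau>c :: "nat \<times> nat \<Rightarrow> real"
  assumes nn_pos: "nn \<ge> 1"
    and E_conn: "weakly_connected {1..nn} E"
    and E_orient: "\<forall>i j. (i, j) \<in> E \<longrightarrow> (j, i) \<notin> E"
    and Et_conn: "weakly_connected {1..nn} Et"
    and L_fin: "\<forall>j\<in>{1..nn}. finite (L j)"
    and dbar_pos: "\<forall>j\<in>{1..nn}. \<forall>l\<in>L j. dbar l j > 0"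
    and pos: "\<forall>j\<in>{1..nn}. M j > 0 \<and> \<gamma> j > 0 \<and> \<kappa> j > 0 \<and> A j > 0 \<and> \<tau> j > 0"
    and B_pos: "\<forall>e\<in>E. B e > 0"
    and \<tau>c_pos: "\<forall>e\<in>Et. \<tau>c e > 0"
  shows "(\<forall>\<sigma> :: 'l \<times> nat \<Rightarrow> real.
            (\<forall>j\<in>{1..nn}. \<forall>l\<in>L j. \<sigma> (l, j) \<in> {0, 1}) \<longrightarrow>
            (\<exists>x. is_equilibrium nn E Et L dbar M \<gamma> \<kappa> A \<tau> pL B \<tau>c \<sigma> x))
       \<and> (\<forall>\<sigma> :: 'l \<times> nat \<Rightarrow> real. \<forall>\<eta> \<omega> pM pc \<psi>.
            (\<forall>j\<in>{1..nn}. \<forall>l\<in>L j. \<sigma> (l, j) \<in> {0, 1}) \<longrightarrow>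
            is_equilibrium nn E Et L dbar M \<gamma> \<kappa> A \<tau> pL B \<tau>c \<sigma> (\<eta>, \<omega>, pM, pc, \<psi>) \<longrightarrow>
            (\<forall>j\<in>{1..nn}. \<omega> j = 0) \<and> (\<exists>c. \<forall>j\<in>{1..nn}. pc j = c))"
proof -
  have nonzero: "\<forall>j\<in>{1..nn}. M j \<noteq> 0 \<and> \<gamma> j \<noteq> 0 \<and> \<tau> j \<noteq> 0" "\<forall>e\<in>Et. \<tau>c e \<noteq> 0"
    using pos \<tau>c_pos by force+
  have \<kappa>_pos: "\<forall>j\<in>{1..nn}. \<kappa> j > 0" and A_pos: "\<forall>j\<in>{1..nn}. A j > 0"
    and B_nonzero: "\<forall>e\<in>E. B e \<noteq> 0"
    using pos B_pos by force+
  show ?thesis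
    using equilibrium_exists[OF nn_pos E_conn Et_conn \<kappa>_pos B_nonzero nonzero]
      equilibrium_frequency_zero_and_pc_consensus[OF nn_pos E_conn Et_conn A_pos nonzero]
    by blast
qed

end
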